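(* Let $n\ge1$ and let $R$ be a plane tree with $n+1$ internal nodes and $n+1$ leaves in which every internal node has a leaf as its first (leftmost) child, equipped with an integer labeling $\ell$ of its leaves. Then $(R,\ell)$ is a decorated tree if and only if $\mathrm{Ctr}(R)$ is a sticky tree. Consequently $\mathrm{Ctr}$ is a bijection from $\mathcal{RS}_n$ to $\mathcal{S}_n$.
   Context: Plane trees: a plane tree is a rooted tree in which the children of every node are linearly ordered (left to right); the root has depth $0$, a child of a node of depth $d$ has depth $d+1$; a leaf is a node without children, an internal node is a node with at least one child. The prefix order is: the root, followed by the prefix order of the subtree of its leftmost child, then of its second child, and so on. $R_u$ (or $S_u$) denotes the subtree rooted at $u$. Sticky trees: a sticky tree is a plane tree $S$ with node set $V$ and a labeling $\ell:V\to\mathbb{N}$ such that: (1) every node $u$ of depth $d$ has $0\le\ell(u)\le d$; (2) every node $u$ of depth $d>0$ has some $v\in S_u$ (possibly $v=u$) with $\ell(v)<d$; (3) for every node $u$ of depth $d$, if some $v\in S_u$ has $\ell(v)=d$, then every node of $S_u$ (including $u$) preceding $v$ in prefix order has label at least $d$. $\mathcal{S}_n$ is the set of sticky trees with $n$ edges. Decorated trees: a decorated tree is a plane tree $R$ with an integer labeling $\ell$ defined only on its leaves such that: (1') for every leaf $f$ whose parent has depth $d$, $-1\le\ell(f)\le d-1$; (2') every internal node $u$ of depth $d>0$ has a descendant leaf $f$ with $\ell(f)<d-1$; (3') for every node $t$ of depth $d$ and every child $u$ of $t$, if some leaf $f$ of $R_u$ has $\ell(f)=d$, then every leaf of $R_u$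 preceding $f$ in prefix order has label at least $d$. $\mathcal{RS}_n$ is the set of decorated trees with $n+1$ internal nodes and $n+1$ leaves in which every internal node has a leaf as its first child. The map $\mathrm{Ctr}$: for $R$ as in the claim (so each leaf is the first child of its parent and leaves are in bijection with internal nodes), $\mathrm{Ctr}(R)$ is the plane tree obtained by deleting all leaves of $R$, where each remaining (formerly internal) node $w$ receives the label $\ell(f)+1$, $f$ being the leaf that was the first child of $w$. *)

theory Defs
  imports Main
begin

text \<open>Plane trees (unlabelled); nodes are addressed by paths of child indices
  (0-based), the root being the empty path. The depth of a node is the length of its path.\<close>
datatype ptree = N "ptree list"

inductive is_node :: "ptree \<Rightarrow> nat list \<Rightarrow> bool" where
  root: "is_node t []"
| child: "i < length cs \<Longrightarrow> is_node (cs ! i) p \<Longrightarrow> is_node (N cs) (i # p)"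

definition nodes :: "ptree \<Rightarrow> nat list set" where
  "nodes t = {p. is_node t p}"

definition is_leaf :: "ptree \<Rightarrow> nat list \<Rightarrow> bool" where
  "is_leaf t p \<longleftrightarrow> is_node t p \<and> \<not> is_node t (p @ [0])"

definition is_internal :: "ptree \<Rightarrow> nat list \<Rightarrow> bool" where
  "is_internal t p \<longleftrightarrow> is_node t p \<and> is_node t (p @ [0])"

definition num_edges :: "ptree \<Rightarrow> nat" where
  "num_edges t = card (nodes t) - 1"

definition subtree :: "ptree \<Rightarrow> nat list \<Rightarrow> nat list set" where
  "subtree t u = {v. is_node t v \<and> (\<exists>w. v = u @ w)}"

text \<open>Prefix (preorder) order: strict lexicographic order on addresses, proper prefixes first.\<close>
definition precedes :: "nat list \<Rightarrow> nat list \<Rightarrow> bool" where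
  "precedes v w \<longleftrightarrow> (v, w) \<in> lexord {(a, b). a < b}"

text \<open>Sticky trees: labels are integers, condition (1) forces them into \<nat>.\<close>
definition sticky :: "ptree \<Rightarrow> (nat list \<Rightarrow> int) \<Rightarrow> bool" where
  "sticky S l \<longleftrightarrow>
     (\<forall>u. is_node S u \<longrightarrow> 0 \<le> l u \<and> l u \<le> int (length u)) \<and>
     (\<forall>u. is_node S u \<and> length u > 0 \<longrightarrow> (\<exists>v\<in>subtree S u. l v < int (length u))) \<and>
     (\<forall>u. is_node S u \<longrightarrow> (\<forall>v\<in>subtree S u. l v = int (length u) \<longrightarrow>
         (\<forall>w\<in>subtree S u. precedes w v \<longrightarrow> l w \<ge> int (length u))))"

text \<open>Decorated trees: only the values of l on leaves matter.\<close>
definition decorated :: "ptree \<Rightarrow> (nat list \<Rightarrow> int) \<Rightarrow> bool" where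
  "decorated R l \<longleftrightarrow>
     (\<forall>f. is_leaf R f \<and> f \<noteq> [] \<longrightarrow> -1 \<le> l f \<and> l f \<le> int (length f - 1) - 1) \<and>
     (\<forall>u. is_internal R u \<and> length u > 0 \<longrightarrow>
         (\<exists>f\<in>subtree R u. is_leaf R f \<and> l f < int (length u) - 1)) \<and>
     (\<forall>t i. is_node R (t @ [i]) \<longrightarrow>
         (\<forall>f\<in>subtree R (t @ [i]). is_leaf R f \<and> l f = int (length t) \<longrightarrow>
            (\<forall>g\<in>subtree R (t @ [i]). is_leaf R g \<and> precedes g f \<longrightarrow> l g \<ge> int (length t))))"

definition first_child_leaf :: "ptree \<Rightarrow> bool" where
  "first_child_leaf R \<longleftrightarrow> (\<forall>u. is_internal R u \<longrightarrow> is_leaf R (u @ [0]))"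

text \<open>Ctr on the tree shape: delete the (first-child) leaves.\<close>
fun ctr :: "ptree \<Rightarrow> ptree" where
  "ctr (N []) = N []"
| "ctr (N (c # cs)) = N (map ctr cs)"

text \<open>Ctr on labels: node p of Ctr(R) is the internal node map Suc p of R, whose
  first child is the leaf map Suc p @ [0]; labels outside the nodes are normalised to 0.\<close>
definition ctr_lab :: "ptree \<Rightarrow> (nat list \<Rightarrow> int) \<Rightarrow> nat list \<Rightarrow> int" where
  "ctr_lab R l p = (if is_node (ctr R) p then l (map Suc p @ [0]) + 1 else 0)"

text \<open>The sets RS_n and S_n; labelings are normalised to 0 outside their domain
  (leaves, resp. nodes) so that a labelled tree is a pair (tree, function).\<close>
definition RS :: "nat \<Rightarrow> (ptree \<times> (nat list \<Rightarrow> int)) set" where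
  "RS n = {(R, l). card {u. is_internal R u} = n + 1 \<and> card {f. is_leaf R f} = n + 1 \<and>
            first_child_leaf R \<and> decorated R l \<and> (\<forall>p. \<not> is_leaf R p \<longrightarrow> l p = 0)}"

definition SS :: "nat \<Rightarrow> (ptree \<times> (nat list \<Rightarrow> int)) set" where
  "SS n = {(S, l). num_edges S = n \<and> sticky S l \<and> (\<forall>p. \<not> is_node S p \<longrightarrow> l p = 0)}"

end

theory Submission
  imports Defs
begin

text \<open>In a tree \<open>R\<close> whose leaves are exactly the first children of its internal nodes, the
  internal nodes are the addresses \<open>map Suc p\<close> without a zero entry and the leaves are their
  first children \<open>map Suc p @ [0]\<close>; deleting the leaves sends both to the node \<open>p\<close> of
  \<open>Ctr(R)\<close>. This correspondence maps the leaves of \<open>R\<^sub>u\<close> onto the nodes of the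
  corresponding subtree of \<open>Ctr(R)\<close>, preserves prefix order and lowers depths by one, so with
  the label shift \<open>l + 1\<close> each condition (i') of a decorated tree becomes condition (i) of a
  sticky tree. \<open>Ctr\<close> is inverted by giving every node a new leaf as its first child.\<close>

section \<open>Plane trees as address sets\<close>

lemma is_node_Cons_iff: "is_node (N cs) (i # p) \<longleftrightarrow> i < length cs \<and> is_node (cs ! i) p"
  by (auto elim: is_node.cases intro: is_node.intros)

declare is_node.root [simp]

lemma is_node_appendD: "is_node t (p @ q) \<Longrightarrow> is_node t p"
proof (induction p arbitrary: t)
  case (Cons a p)
  obtain cs where "t = N cs" by (cases t)
  with Cons show ?case by (auto simp: is_node_Cons_iff)
qed simp

lemma is_node_snoc_zero: "is_node t (p @ [i]) \<Longrightarrow> is_node t (p @ [0])"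
proof (induction p arbitrary: t)
  case Nil
  then show ?case by (cases t) (auto simp: is_node_Cons_iff)
next
  case (Cons a p)
  obtain cs where "t = N cs" by (cases t)
  with Cons show ?case by (auto simp: is_node_Cons_iff)
qed

lemma subtree_is_node: "v \<in> subtree t u \<Longrightarrow> is_node t v"
  unfolding subtree_def by blast

lemma subtree_is_leaf: "is_leaf t f \<Longrightarrow> subtree t f = {f}"
proof -
  assume leaf: "is_leaf t f"
  have "w = []" if "is_node t (f @ w)" for w
  proof (rule ccontr)
    assume "w \<noteq> []"
    then obtain j w' where "w = j # w'" by (cases w) auto
    with that have "is_node t (f @ [j])" using is_node_appendD[of t "f @ [j]" w'] by simp
    then have "is_node t (f @ [0])" by (rule is_node_snoc_zero)
    with leaf show False unfolding is_leaf_def by blast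
  qed
  with leaf show ?thesis unfolding subtree_def is_leaf_def by auto
qed

lemma not_precedes_refl: "\<not> precedes v v"
  unfolding precedes_def by (simp add: lexord_irreflexive)

lemma finite_is_node: "finite {p. is_node t p}"
proof (induction t)
  case (N cs)
  have "{p. is_node (N cs) p} \<subseteq> insert [] (\<Union>i<length cs. Cons i ` {p. is_node (cs ! i) p})"
  proof
    fix p assume "p \<in> {p. is_node (N cs) p}"
    then show "p \<in> insert [] (\<Union>i<length cs. Cons i ` {p. is_node (cs ! i) p})"
      by (cases p) (auto simp: is_node_Cons_iff)
  qed
  moreover have "finite (insert [] (\<Union>i<length cs. Cons i ` {p. is_node (cs ! i) p}))"
    using N by auto
  ultimately show ?case by (rule finite_subset)
qed

lemma card_is_node_pos: "card {p. is_node t p} > 0"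
  using finite_is_node[of t] is_node.root[of t] card_gt_0_iff by blast

lemma ptree_eqI: "(\<And>p. is_node t1 p \<longleftrightarrow> is_node t2 p) \<Longrightarrow> t1 = t2"
proof (induction t1 arbitrary: t2)
  case (N cs)
  obtain ds where t2: "t2 = N ds" by (cases t2)
  have "i < length cs \<longleftrightarrow> i < length ds" for i
    using N.prems[of "[i]"] by (simp add: t2 is_node_Cons_iff)
  then have len: "length cs = length ds"
    by (meson linorder_neqE_nat less_irrefl)
  have "cs ! i = ds ! i" if "i < length cs" for i
    using N.IH[OF nth_mem[OF that]] N.prems[of "i # _"] that len
    by (simp add: t2 is_node_Cons_iff)
  then show ?case using len t2 by (simp add: nth_equalityI)
qed

section \<open>Contraction and its inverse\<close>

lemma is_node_ctr_iff: "is_node (ctr t) p \<longleftrightarrow> is_node t (map Suc p)"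
proof (induction p arbitrary: t)
  case (Cons a p)
  obtain cs where t: "t = N cs" by (cases t)
  show ?case
    by (cases cs) (simp_all add: t Cons.IH is_node_Cons_iff cong: conj_cong)
qed simp

lemma ctr_lab_subtree:
  "v \<in> subtree (ctr R) p \<Longrightarrow> ctr_lab R l v = l (map Suc v @ [0]) + 1"
  unfolding ctr_lab_def by (simp add: subtree_is_node)

lemma zero_in_set_neq_map_Suc: "0 \<in> set xs \<Longrightarrow> xs \<noteq> map Suc p"
  by auto

lemma zero_notin_set_iff_map_Suc: "0 \<notin> set xs \<longleftrightarrow> (\<exists>p. xs = map Suc p)"
proof
  assume "0 \<notin> set xs"
  then have "xs = map Suc (map (\<lambda>x. x - 1) xs)" by (induction xs) auto
  then show "\<exists>p. xs = map Suc p" ..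
qed auto

lemma map_Suc_snoc_zero_prefixD: "map Suc q @ [0] = map Suc p @ w \<Longrightarrow> \<exists>w'. q = p @ w'"
proof (induction p arbitrary: q)
  case (Cons a p)
  then show ?case by (cases q) auto
qed simp

lemma precedes_map_Suc_snoc_zero_iff [simp]:
  "precedes (map Suc a @ [0]) (map Suc b @ [0]) \<longleftrightarrow> precedes a b"
  unfolding precedes_def
proof (induction a arbitrary: b)
  case Nil
  then show ?case by (cases b) auto
next
  case (Cons x a)
  then show ?case by (cases b) auto
qed

fun expand :: "ptree \<Rightarrow> ptree" where
  "expand (N cs) = N (N [] # map expand cs)"

lemma ctr_expand: "ctr (expand t) = t"
  by (induction t) (simp add: map_idI)

lemma is_node_expand_iff:
  "is_node (expand t) q \<longleftrightarrow> (\<exists>p. is_node t p \<and> (q = map Suc p \<or> q = map Suc p @ [0]))"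
proof (induction q arbitrary: t)
  case Nil
  then show ?case by (auto intro: exI[of _ "[]"])
next
  case (Cons a r)
  obtain cs where t: "t = N cs" by (cases t)
  show ?case
  proof (cases a)
    case 0
    have "is_node (N []) r \<longleftrightarrow> r = []" by (cases r) (simp_all add: is_node_Cons_iff)
    moreover have "0 # r \<noteq> map Suc p" for p by (cases p) simp_all
    moreover have "0 # r = map Suc p @ [0] \<longleftrightarrow> p = [] \<and> r = []" for p by (cases p) simp_all
    ultimately show ?thesis by (auto simp: t 0 is_node_Cons_iff)
  next
    case (Suc i)
    have address_cases: "a # r = map Suc p \<or> a # r = map Suc p @ [0] \<longleftrightarrow>
        (\<exists>p'. p = i # p' \<and> (r = map Suc p' \<or> r = map Suc p' @ [0]))" for p
      by (cases p) (auto simp: Suc)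
    have "is_node (expand t) (a # r) \<longleftrightarrow>
        i < length cs \<and> (\<exists>p'. is_node (cs ! i) p' \<and> (r = map Suc p' \<or> r = map Suc p' @ [0]))"
      by (simp add: t Suc Cons.IH is_node_Cons_iff cong: conj_cong)
    also have "\<dots> \<longleftrightarrow> (\<exists>p'. is_node t (i # p') \<and> (r = map Suc p' \<or> r = map Suc p' @ [0]))"
      by (simp add: t is_node_Cons_iff)
    also have "\<dots> \<longleftrightarrow> (\<exists>p. is_node t p \<and> (a # r = map Suc p \<or> a # r = map Suc p @ [0]))"
      unfolding address_cases by blast
    finally show ?thesis .
  qed
qed

section \<open>Trees whose leaves are the first children\<close>

definition leaves_first_children :: "ptree \<Rightarrow> bool" where
  "leaves_first_children R \<longleftrightarrow> first_child_leaf R \<and> (\<forall>f. is_leaf R f \<longrightarrow> (\<exists>u. f = u @ [0]))"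

lemma is_internal_map_Suc_if_is_node_ctr:
  assumes R: "leaves_first_children R" and p: "is_node (ctr R) p"
  shows "is_internal R (map Suc p)"
proof -
  have node: "is_node R (map Suc p)" using p is_node_ctr_iff by blast
  have "\<not> is_leaf R (map Suc p)"
  proof
    assume "is_leaf R (map Suc p)"
    then obtain u where "map Suc p = u @ [0]" using R unfolding leaves_first_children_def by blast
    then show False by (metis zero_in_set_neq_map_Suc in_set_conv_decomp)
  qed
  with node show ?thesis unfolding is_leaf_def is_internal_def by blast
qed

lemma is_node_iff_ctr:
  assumes R: "leaves_first_children R"
  shows "is_node R q \<longleftrightarrow> (\<exists>p. is_node (ctr R) p \<and> (q = map Suc p \<or> q = map Suc p @ [0]))"
proof
  assume q: "is_node R q"
  show "\<exists>p. is_node (ctr R) p \<and> (q = map Suc p \<or> q = map Suc p @ [0])"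
  proof (cases "0 \<in> set q")
    case False
    then obtain p where "q = map Suc p" using zero_notin_set_iff_map_Suc by blast
    with q show ?thesis using is_node_ctr_iff by metis
  next
    case True
    then obtain a b where q_eq: "q = a @ 0 # b" and "0 \<notin> set a" by (metis split_list_first)
    then obtain p where a_eq: "a = map Suc p" using zero_notin_set_iff_map_Suc by blast
    have node: "is_node R (a @ [0])" using q q_eq is_node_appendD[of R "a @ [0]" b] by simp
    then have "is_internal R a" using is_node_appendD is_internal_def by blast
    then have leaf: "is_leaf R (a @ [0])"
      using R unfolding leaves_first_children_def first_child_leaf_def by blast
    have "b = []"
    proof (rule ccontr)
      assume "b \<noteq> []"
      then obtain j b' where "b = j # b'" by (cases b) auto
      then have "is_node R ((a @ [0]) @ [j])"
        using q q_eq is_node_appendD[of R "(a @ [0]) @ [j]" b'] by simp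
      then have "is_node R ((a @ [0]) @ [0])" by (rule is_node_snoc_zero)
      with leaf show False unfolding is_leaf_def by blast
    qed
    moreover have "is_node (ctr R) p"
      using node is_node_appendD[of R a "[0]"] is_node_ctr_iff a_eq by metis
    ultimately show ?thesis using q_eq a_eq by blast
  qed
next
  assume "\<exists>p. is_node (ctr R) p \<and> (q = map Suc p \<or> q = map Suc p @ [0])"
  then show "is_node R q" using is_internal_map_Suc_if_is_node_ctr[OF R] is_internal_def by blast
qed

lemma is_leaf_iff_ctr:
  assumes R: "leaves_first_children R"
  shows "is_leaf R q \<longleftrightarrow> (\<exists>p. is_node (ctr R) p \<and> q = map Suc p @ [0])"
proof
  assume leaf: "is_leaf R q"
  then obtain p where p: "is_node (ctr R) p" "q = map Suc p \<or> q = map Suc p @ [0]"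
    using is_node_iff_ctr[OF R, of q] unfolding is_leaf_def by blast
  have "q \<noteq> map Suc p"
    using is_internal_map_Suc_if_is_node_ctr[OF R p(1)] leaf
    unfolding is_leaf_def is_internal_def by blast
  with p show "\<exists>p. is_node (ctr R) p \<and> q = map Suc p @ [0]" by blast
next
  assume "\<exists>p. is_node (ctr R) p \<and> q = map Suc p @ [0]"
  then obtain p where p: "is_node (ctr R) p" "q = map Suc p @ [0]" by blast
  have "\<not> is_node R (q @ [0])"
  proof
    assume "is_node R (q @ [0])"
    then obtain p' where "q @ [0] = map Suc p' \<or> q @ [0] = map Suc p' @ [0]"
      using is_node_iff_ctr[OF R] by blast
    moreover have "q @ [0] \<noteq> map Suc p'" "q \<noteq> map Suc p'"
      using p(2) by (simp_all add: zero_in_set_neq_map_Suc)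
    ultimately show False by simp
  qed
  then show "is_leaf R q" using p is_node_iff_ctr[OF R] unfolding is_leaf_def by blast
qed

lemma is_internal_iff_ctr:
  assumes R: "leaves_first_children R"
  shows "is_internal R q \<longleftrightarrow> (\<exists>p. is_node (ctr R) p \<and> q = map Suc p)"
proof
  assume internal: "is_internal R q"
  then obtain p where p: "is_node (ctr R) p" "q = map Suc p \<or> q = map Suc p @ [0]"
    using is_node_iff_ctr[OF R] is_internal_def by blast
  have "\<not> is_leaf R q" using internal is_internal_def is_leaf_def by blast
  with p show "\<exists>p. is_node (ctr R) p \<and> q = map Suc p" using is_leaf_iff_ctr[OF R] by blast
next
  assume "\<exists>p. is_node (ctr R) p \<and> q = map Suc p"
  then show "is_internal R q" using is_internal_map_Suc_if_is_node_ctr[OF R] by blast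
qed

lemma leaf_in_subtree_iff_ctr:
  assumes R: "leaves_first_children R" and p: "is_node (ctr R) p"
  shows "f \<in> subtree R (map Suc p) \<and> is_leaf R f \<longleftrightarrow>
         (\<exists>v \<in> subtree (ctr R) p. f = map Suc v @ [0])"
proof
  assume f: "f \<in> subtree R (map Suc p) \<and> is_leaf R f"
  then obtain v where v: "is_node (ctr R) v" "f = map Suc v @ [0]" using is_leaf_iff_ctr[OF R] by blast
  obtain w where "f = map Suc p @ w" using f unfolding subtree_def by blast
  with v(2) obtain w' where "v = p @ w'" using map_Suc_snoc_zero_prefixD by metis
  with v show "\<exists>v \<in> subtree (ctr R) p. f = map Suc v @ [0]" unfolding subtree_def by blast
next
  assume "\<exists>v \<in> subtree (ctr R) p. f = map Suc v @ [0]"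
  then obtain v w where v: "is_node (ctr R) v" "v = p @ w" "f = map Suc v @ [0]"
    unfolding subtree_def by blast
  have "is_leaf R f" using v is_leaf_iff_ctr[OF R] by blast
  moreover have "f = map Suc p @ (map Suc w @ [0])" using v by simp
  ultimately show "f \<in> subtree R (map Suc p) \<and> is_leaf R f"
    unfolding subtree_def is_leaf_def by blast
qed

lemma leaves_first_children_eqI:
  assumes "leaves_first_children R1" "leaves_first_children R2" "ctr R1 = ctr R2"
  shows "R1 = R2"
  by (rule ptree_eqI) (simp add: assms is_node_iff_ctr)

lemma leaves_first_children_if_is_node_iff:
  assumes nodes: "\<And>q. is_node R q \<longleftrightarrow> (\<exists>p. is_node T p \<and> (q = map Suc p \<or> q = map Suc p @ [0]))"
  shows "leaves_first_children R"
proof -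
  have first_child: "is_leaf R (map Suc p @ [0])" if "is_node T p" for p
  proof -
    have "\<not> is_node R (map Suc p @ [0] @ [0])"
    proof
      assume "is_node R (map Suc p @ [0] @ [0])"
      then obtain p' where "map Suc p @ [0] @ [0] = map Suc p' \<or> map Suc p @ [0] = map Suc p'"
        using nodes by auto
      then show False by (simp add: zero_in_set_neq_map_Suc)
    qed
    then show ?thesis using that nodes unfolding is_leaf_def by auto
  qed
  have "first_child_leaf R"
    unfolding first_child_leaf_def
  proof (intro allI impI)
    fix u assume "is_internal R u"
    then obtain p where p: "is_node T p" "u @ [0] = map Suc p \<or> u @ [0] = map Suc p @ [0]"
      using nodes unfolding is_internal_def by blast
    then have "u = map Suc p" by (auto simp: zero_in_set_neq_map_Suc)
    with first_child p(1) show "is_leaf R (u @ [0])" by simp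
  qed
  moreover have "\<exists>u. f = u @ [0]" if f: "is_leaf R f" for f
  proof -
    obtain p where p: "is_node T p" "f = map Suc p \<or> f = map Suc p @ [0]"
      using f nodes unfolding is_leaf_def by blast
    have "is_node R (map Suc p @ [0])" using nodes p(1) by blast
    with f have "f \<noteq> map Suc p" unfolding is_leaf_def by blast
    with p show ?thesis by blast
  qed
  ultimately show ?thesis unfolding leaves_first_children_def by blast
qed

lemma leaves_first_children_expand: "leaves_first_children (expand t)"
  by (rule leaves_first_children_if_is_node_iff) (rule is_node_expand_iff)

section \<open>Decorated trees and sticky trees\<close>

definition sticky_bounds :: "ptree \<Rightarrow> (nat list \<Rightarrow> int) \<Rightarrow> bool" where
  "sticky_bounds S l \<longleftrightarrow> (\<forall>u. is_node S u \<longrightarrow> 0 \<le> l u \<and> l u \<le> int (length u))"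

definition sticky_lower :: "ptree \<Rightarrow> (nat list \<Rightarrow> int) \<Rightarrow> bool" where
  "sticky_lower S l \<longleftrightarrow>
     (\<forall>u. is_node S u \<and> length u > 0 \<longrightarrow> (\<exists>v\<in>subtree S u. l v < int (length u)))"

definition sticky_prefix :: "ptree \<Rightarrow> (nat list \<Rightarrow> int) \<Rightarrow> bool" where
  "sticky_prefix S l \<longleftrightarrow>
     (\<forall>u. is_node S u \<longrightarrow> (\<forall>v\<in>subtree S u. l v = int (length u) \<longrightarrow>
         (\<forall>w\<in>subtree S u. precedes w v \<longrightarrow> l w \<ge> int (length u))))"

definition decorated_bounds :: "ptree \<Rightarrow> (nat list \<Rightarrow> int) \<Rightarrow> bool" where
  "decorated_bounds R l \<longleftrightarrow>
     (\<forall>f. is_leaf R f \<and> f \<noteq> [] \<longrightarrow> -1 \<le> l f \<and> l f \<le> int (length f - 1) - 1)"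

definition decorated_lower :: "ptree \<Rightarrow> (nat list \<Rightarrow> int) \<Rightarrow> bool" where
  "decorated_lower R l \<longleftrightarrow>
     (\<forall>u. is_internal R u \<and> length u > 0 \<longrightarrow>
         (\<exists>f\<in>subtree R u. is_leaf R f \<and> l f < int (length u) - 1))"

definition decorated_prefix :: "ptree \<Rightarrow> (nat list \<Rightarrow> int) \<Rightarrow> bool" where
  "decorated_prefix R l \<longleftrightarrow>
     (\<forall>t i. is_node R (t @ [i]) \<longrightarrow>
         (\<forall>f\<in>subtree R (t @ [i]). is_leaf R f \<and> l f = int (length t) \<longrightarrow>
            (\<forall>g\<in>subtree R (t @ [i]). is_leaf R g \<and> precedes g f \<longrightarrow> l g \<ge> int (length t))))"

lemma sticky_iff: "sticky S l \<longleftrightarrow> sticky_bounds S l \<and> sticky_lower S l \<and> sticky_prefix S l"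
  unfolding sticky_def sticky_bounds_def sticky_lower_def sticky_prefix_def ..

lemma decorated_iff:
  "decorated R l \<longleftrightarrow> decorated_bounds R l \<and> decorated_lower R l \<and> decorated_prefix R l"
  unfolding decorated_def decorated_bounds_def decorated_lower_def decorated_prefix_def ..

lemma decorated_bounds_iff_sticky_bounds:
  assumes R: "leaves_first_children R"
  shows "decorated_bounds R l \<longleftrightarrow> sticky_bounds (ctr R) (ctr_lab R l)"
  unfolding decorated_bounds_def sticky_bounds_def is_leaf_iff_ctr[OF R]
  by (auto simp: ctr_lab_def)

lemma decorated_lower_iff_sticky_lower:
  assumes R: "leaves_first_children R"
  shows "decorated_lower R l \<longleftrightarrow> sticky_lower (ctr R) (ctr_lab R l)"
proof
  assume dec: "decorated_lower R l"
  show "sticky_lower (ctr R) (ctr_lab R l)"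
    unfolding sticky_lower_def
  proof (intro allI impI)
    fix p assume p: "is_node (ctr R) p \<and> length p > 0"
    then have "is_internal R (map Suc p)" using is_internal_map_Suc_if_is_node_ctr[OF R] by blast
    with dec p obtain f where f: "f \<in> subtree R (map Suc p)" "is_leaf R f" "l f < int (length p) - 1"
      unfolding decorated_lower_def by fastforce
    then obtain v where "v \<in> subtree (ctr R) p" "f = map Suc v @ [0]"
      using leaf_in_subtree_iff_ctr[OF R] p by blast
    with f(3) show "\<exists>v\<in>subtree (ctr R) p. ctr_lab R l v < int (length p)"
      by (intro bexI[of _ v]) (auto simp: ctr_lab_subtree)
  qed
next
  assume sticky: "sticky_lower (ctr R) (ctr_lab R l)"
  show "decorated_lower R l"
    unfolding decorated_lower_def
  proof (intro allI impI)
    fix u assume u: "is_internal R u \<and> length u > 0"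
    then obtain p where p: "is_node (ctr R) p" "u = map Suc p" using is_internal_iff_ctr[OF R] by blast
    with sticky u obtain v where v: "v \<in> subtree (ctr R) p" "ctr_lab R l v < int (length p)"
      unfolding sticky_lower_def by auto
    then have "map Suc v @ [0] \<in> subtree R u \<and> is_leaf R (map Suc v @ [0])"
      using leaf_in_subtree_iff_ctr[OF R p(1)] p(2) by blast
    with v p(2) show "\<exists>f\<in>subtree R u. is_leaf R f \<and> l f < int (length u) - 1"
      by (auto simp: ctr_lab_subtree)
  qed
qed

text \<open>At the root of the sticky tree, and at the leaves of the decorated tree, the
  prefix conditions hold for trivial reasons: by the bounds (1), and because the subtree of
  a leaf is a single node, respectively.\<close>

lemma sticky_prefix_if_decorated_prefix:
  assumes R: "leaves_first_children R"
    and bounds: "sticky_bounds (ctr R) (ctr_lab R l)" and dec: "decorated_prefix R l"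
  shows "sticky_prefix (ctr R) (ctr_lab R l)"
  unfolding sticky_prefix_def
proof (intro allI impI ballI)
  fix u v w
  assume u: "is_node (ctr R) u" and v: "v \<in> subtree (ctr R) u" and w: "w \<in> subtree (ctr R) u"
    and Lv: "ctr_lab R l v = int (length u)" and vw: "precedes w v"
  show "ctr_lab R l w \<ge> int (length u)"
  proof (cases u rule: rev_exhaust)
    case Nil
    with bounds w show ?thesis unfolding sticky_bounds_def by (simp add: subtree_is_node)
  next
    case (snoc u' j)
    define t where "t = map Suc u'"
    have u_eq: "map Suc u = t @ [Suc j]" by (simp add: snoc t_def)
    have node: "is_node R (t @ [Suc j])"
      using is_internal_map_Suc_if_is_node_ctr[OF R u] u_eq unfolding is_internal_def by simp
    have leaf: "map Suc x @ [0] \<in> subtree R (t @ [Suc j]) \<and> is_leaf R (map Suc x @ [0])"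
      if "x \<in> subtree (ctr R) u" for x
      using leaf_in_subtree_iff_ctr[OF R u, of "map Suc x @ [0]"] that u_eq by auto
    have lv: "l (map Suc v @ [0]) = int (length t)"
      using Lv v snoc by (simp add: ctr_lab_subtree t_def)
    have "l (map Suc w @ [0]) \<ge> int (length t)"
      by (rule dec[unfolded decorated_prefix_def, rule_format,
            OF node leaf[OF v, THEN conjunct1] _ leaf[OF w, THEN conjunct1]])
        (use lv leaf[OF v] leaf[OF w] vw in simp_all)
    with w snoc show ?thesis by (simp add: ctr_lab_subtree t_def)
  qed
qed

lemma decorated_prefix_if_sticky_prefix:
  assumes R: "leaves_first_children R" and sticky: "sticky_prefix (ctr R) (ctr_lab R l)"
  shows "decorated_prefix R l"
  unfolding decorated_prefix_def
proof (intro allI impI ballI)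
  fix t i f g
  assume node: "is_node R (t @ [i])" and f: "f \<in> subtree R (t @ [i])" and g: "g \<in> subtree R (t @ [i])"
    and f_leaf: "is_leaf R f \<and> l f = int (length t)" and g_leaf: "is_leaf R g \<and> precedes g f"
  show "l g \<ge> int (length t)"
  proof (cases "is_leaf R (t @ [i])")
    case True
    with f g have "g = f" by (simp add: subtree_is_leaf)
    with g_leaf show ?thesis by (simp add: not_precedes_refl)
  next
    case False
    with node obtain p where p: "is_node (ctr R) p" "t @ [i] = map Suc p"
      using is_internal_iff_ctr[OF R] unfolding is_internal_def is_leaf_def by blast
    then have "length p = Suc (length t)" by (metis length_append_singleton length_map)
    then have len: "int (length t) = int (length p) - 1" by simp
    obtain v where v: "v \<in> subtree (ctr R) p" "f = map Suc v @ [0]"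
      using leaf_in_subtree_iff_ctr[OF R p(1)] f f_leaf p(2) by metis
    obtain w where w: "w \<in> subtree (ctr R) p" "g = map Suc w @ [0]"
      using leaf_in_subtree_iff_ctr[OF R p(1)] g g_leaf p(2) by metis
    have "ctr_lab R l v = int (length p)" using v f_leaf len by (simp add: ctr_lab_subtree)
    moreover have "precedes w v" using g_leaf v w by simp
    ultimately have "ctr_lab R l w \<ge> int (length p)"
      using sticky p(1) v(1) w(1) unfolding sticky_prefix_def by blast
    with w len show ?thesis by (simp add: ctr_lab_subtree)
  qed
qed

lemma decorated_iff_sticky_ctr:
  assumes R: "leaves_first_children R"
  shows "decorated R l \<longleftrightarrow> sticky (ctr R) (ctr_lab R l)"
  unfolding decorated_iff sticky_iff
  using decorated_bounds_iff_sticky_bounds[OF R] decorated_lower_iff_sticky_lower[OF R]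
    sticky_prefix_if_decorated_prefix[OF R] decorated_prefix_if_sticky_prefix[OF R]
  by blast

section \<open>Counting and the bijection\<close>

lemma leaves_first_children_if_card_eq:
  assumes card: "card {u. is_internal R u} = card {f. is_leaf R f}" and R: "first_child_leaf R"
  shows "leaves_first_children R"
proof -
  have finite: "finite {f. is_leaf R f}"
    by (rule finite_subset[OF _ finite_is_node]) (auto simp: is_leaf_def)
  let ?first_child = "\<lambda>u. u @ [0]"
  have sub: "?first_child ` {u. is_internal R u} \<subseteq> {f. is_leaf R f}"
    using R unfolding first_child_leaf_def by blast
  have "inj_on ?first_child {u. is_internal R u}" by (rule inj_onI) simp
  with card have "card (?first_child ` {u. is_internal R u}) = card {f. is_leaf R f}"
    by (simp add: card_image)
  with finite sub have "?first_child ` {u. is_internal R u} = {f. is_leaf R f}"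
    by (simp add: card_subset_eq)
  with R show ?thesis unfolding leaves_first_children_def by blast
qed

lemma card_internal_eq_card_nodes_ctr:
  assumes "leaves_first_children R"
  shows "card {u. is_internal R u} = card {p. is_node (ctr R) p}"
proof -
  have "{u. is_internal R u} = map Suc ` {p. is_node (ctr R) p}"
    using is_internal_iff_ctr[OF assms] by blast
  moreover have "inj_on (map Suc) X" for X by (rule inj_onI) simp
  ultimately show ?thesis by (simp add: card_image)
qed

lemma card_leaves_eq_card_nodes_ctr:
  assumes "leaves_first_children R"
  shows "card {f. is_leaf R f} = card {p. is_node (ctr R) p}"
proof -
  have "{f. is_leaf R f} = (\<lambda>p. map Suc p @ [0]) ` {p. is_node (ctr R) p}"
    using is_leaf_iff_ctr[OF assms] by blast
  moreover have "inj_on (\<lambda>p. map Suc p @ [0]) X" for X by (rule inj_onI) simp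
  ultimately show ?thesis by (simp add: card_image)
qed

lemma leaves_first_children_if_in_RS: "(R, l) \<in> RS n \<Longrightarrow> leaves_first_children R"
  unfolding RS_def by (simp add: leaves_first_children_if_card_eq)

lemma inj_on_ctr_RS: "inj_on (\<lambda>(R, l). (ctr R, ctr_lab R l)) (RS n)"
proof (rule inj_onI, clarsimp)
  fix R1 l1 R2 l2
  assume in_RS: "(R1, l1) \<in> RS n" "(R2, l2) \<in> RS n"
    and ctr_eq: "ctr R1 = ctr R2" and lab_eq: "ctr_lab R1 l1 = ctr_lab R2 l2"
  have R1: "leaves_first_children R1" and R2: "leaves_first_children R2"
    using in_RS by (auto intro: leaves_first_children_if_in_RS)
  then have R_eq: "R1 = R2" using ctr_eq by (rule leaves_first_children_eqI)
  have "l1 q = l2 q" for q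
  proof (cases "is_leaf R1 q")
    case True
    then obtain p where p: "is_node (ctr R1) p" "q = map Suc p @ [0]"
      using is_leaf_iff_ctr[OF R1] by blast
    from lab_eq have "ctr_lab R1 l1 p = ctr_lab R2 l2 p" by simp
    with p R_eq show ?thesis unfolding ctr_lab_def by simp
  next
    case False
    with in_RS R_eq show ?thesis unfolding RS_def by simp
  qed
  with R_eq show "R1 = R2 \<and> l1 = l2" by auto
qed

lemma ctr_RS_subset_SS: "(\<lambda>(R, l). (ctr R, ctr_lab R l)) ` RS n \<subseteq> SS n"
proof clarify
  fix R l assume in_RS: "(R, l) \<in> RS n"
  then have R: "leaves_first_children R" by (rule leaves_first_children_if_in_RS)
  with in_RS have "num_edges (ctr R) = n"
    unfolding RS_def num_edges_def nodes_def by (simp add: card_internal_eq_card_nodes_ctr)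
  moreover have "sticky (ctr R) (ctr_lab R l)"
    using in_RS decorated_iff_sticky_ctr[OF R] unfolding RS_def by simp
  ultimately show "(ctr R, ctr_lab R l) \<in> SS n" unfolding SS_def ctr_lab_def by simp
qed

lemma SS_subset_ctr_RS: "SS n \<subseteq> (\<lambda>(R, l). (ctr R, ctr_lab R l)) ` RS n"
proof clarify
  fix S L assume in_SS: "(S, L) \<in> SS n"
  define R where "R = expand S"
  define l where "l q = (if is_leaf R q then L (map (\<lambda>x. x - 1) (butlast q)) - 1 else 0)" for q
  have R: "leaves_first_children R" unfolding R_def by (rule leaves_first_children_expand)
  have ctr_R: "ctr R = S" unfolding R_def by (rule ctr_expand)
  have "ctr_lab R l p = L p" for p
  proof (cases "is_node S p")
    case True
    then have "is_leaf R (map Suc p @ [0])" using is_leaf_iff_ctr[OF R] ctr_R by blast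
    with True ctr_R show ?thesis unfolding ctr_lab_def l_def by (simp add: comp_def)
  next
    case False
    with in_SS ctr_R show ?thesis unfolding ctr_lab_def SS_def by simp
  qed
  then have lab: "ctr_lab R l = L" ..
  have "card {p. is_node S p} - 1 = n" using in_SS unfolding SS_def num_edges_def nodes_def by simp
  with card_is_node_pos[of S] have "card {p. is_node S p} = n + 1" by linarith
  with R ctr_R in_SS lab have "(R, l) \<in> RS n"
    unfolding RS_def SS_def
    by (simp add: card_internal_eq_card_nodes_ctr card_leaves_eq_card_nodes_ctr
        decorated_iff_sticky_ctr leaves_first_children_def l_def)
  with ctr_R lab show "(S, L) \<in> (\<lambda>(R, l). (ctr R, ctr_lab R l)) ` RS n"
    by (intro image_eqI[of _ _ "(R, l)"]) auto
qed

theorem proposition4p2: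
  fixes n :: nat
  assumes "n \<ge> 1"
  shows "(\<forall>R l. card {u. is_internal R u} = n + 1 \<and> card {f. is_leaf R f} = n + 1 \<and>
             first_child_leaf R \<longrightarrow> (decorated R l \<longleftrightarrow> sticky (ctr R) (ctr_lab R l)))
         \<and> bij_betw (\<lambda>(R, l). (ctr R, ctr_lab R l)) (RS n) (SS n)"
proof (intro conjI allI impI)
  fix R l
  assume "card {u. is_internal R u} = n + 1 \<and> card {f. is_leaf R f} = n + 1 \<and> first_child_leaf R"
  then have "leaves_first_children R"
    by (simp add: leaves_first_children_if_card_eq)
  then show "decorated R l \<longleftrightarrow> sticky (ctr R) (ctr_lab R l)"
    by (rule decorated_iff_sticky_ctr)
next
  show "bij_betw (\<lambda>(R, l). (ctr R, ctr_lab R l)) (RS n) (SS n)"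
    unfolding bij_betw_def using inj_on_ctr_RS ctr_RS_subset_SS SS_subset_ctr_RS by blast
qed

end
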